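(* Let $(X,d)$ be a complete metric space and $f:X\to\mathbb{R}\cup\{+\infty\}$ a proper lower semicontinuous function with $\inf_Xf=0$. Then $f=\mathrm{lsc}(\mathcal{I}[f])$ on $X$, where \[\mathcal{I}[f](x):=\inf\Big\{\sum_{n=0}^\infty G[f](x_n)d(x_n,x_{n+1}):\{x_n\}_n\subset X,\ x_0=x,\ \lim_{n\to\infty}G[f](x_n)=0\Big\}.\]
   Context: Global slope: $G[f](x)=\sup_{y\neq x}\frac{(f(x)-f(y))_+}{d(x,y)}$ if $f(x)<+\infty$ and $G[f](x)=+\infty$ otherwise ($\alpha_+=\max\{\alpha,0\}$). For $g:X\to\mathbb{R}\cup\{+\infty\}$, its lower semicontinuous envelope is $\mathrm{lsc}(g)(x)=\liminf_{y\to x}g(y)$ (with $y=x$ allowed). Proper means not identically $+\infty$. *)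

theory Defs
  imports "HOL-Analysis.Analysis"
begin

definition lsc_fun :: "('a::metric_space \<Rightarrow> ereal) \<Rightarrow> bool" where
  "lsc_fun f \<longleftrightarrow> (\<forall>x. f x \<le> Liminf (at x) f)"

text \<open>Lower semicontinuous envelope: liminf as y tends to x, with y = x allowed.\<close>
definition lsc_env :: "('a::metric_space \<Rightarrow> ereal) \<Rightarrow> 'a \<Rightarrow> ereal" where
  "lsc_env g x = Liminf (nhds x) g"

text \<open>Global slope. The supremum of nonnegative quantities over an empty index set
  (one-point space) is taken to be 0, hence the inserted 0.\<close>
definition global_slope :: "('a::metric_space \<Rightarrow> ereal) \<Rightarrow> 'a \<Rightarrow> ereal" where
  "global_slope f x =
     (if f x < \<infinity>
      then Sup (insert 0 ((\<lambda>y. max (f x - f y) 0 / ereal (dist x y)) ` {y. y \<noteq> x}))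
      else \<infinity>)"

definition I_fun :: "('a::metric_space \<Rightarrow> ereal) \<Rightarrow> 'a \<Rightarrow> ereal" where
  "I_fun f x = Inf {(\<Sum>n. global_slope f (xs n) * ereal (dist (xs n) (xs (Suc n)))) | xs.
                     xs 0 = x \<and> (\<lambda>n. global_slope f (xs n)) \<longlonglongrightarrow> 0}"

end

theory Submission
  imports Defs
begin

text \<open>
  Lower bound: along any admissible path \<open>f x\<^sub>0 \<le> f x\<^sub>N + \<Sum>\<^sub>n\<^sub><\<^sub>N G(x\<^sub>n) d(x\<^sub>n, x\<^sub>n\<^sub>+\<^sub>1)\<close>.
  If the series were smaller than \<open>f x\<^sub>0\<close>, all \<open>f x\<^sub>n\<close> would stay above some \<open>c > 0\<close>; comparing
  with a point \<open>y\<close> where \<open>f y < c/2\<close> gives \<open>G(x\<^sub>n) \<ge> c / (2 d(x\<^sub>n, y))\<close>, so the series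
  dominates the relative increments of \<open>d(x\<^sub>n, y)\<close>. Hence these distances stay bounded and the
  slopes cannot tend to 0. So \<open>f \<le> I[f]\<close>, and \<open>f \<le> lsc(I[f])\<close> since \<open>f\<close> is lower semicontinuous.

  Upper bound: Ekeland's principle applied repeatedly with the constants \<open>\<lambda>\<^sub>n = \<Lambda> \<theta>\<^sup>-\<^sup>n\<close>
  yields a path with \<open>G(z\<^sub>n) \<le> \<lambda>\<^sub>n\<close> along which \<open>f\<close> drops by at least \<open>\<lambda>\<^sub>n\<^sub>+\<^sub>1 d(z\<^sub>n, z\<^sub>n\<^sub>+\<^sub>1)\<close>
  at each step. The slope series telescopes to at most \<open>\<theta> f(z\<^sub>0)\<close>, and \<open>z\<^sub>0\<close> lies within
  \<open>f(x) / \<Lambda>\<close> of \<open>x\<close>; letting \<open>\<Lambda> \<rightarrow> \<infinity>\<close> and \<open>\<theta> \<rightarrow> 1\<close> gives \<open>lsc(I[f]) \<le> f\<close>.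
\<close>

lemma lsc_fun_eventually_greater:
  assumes "lsc_fun f" "c < f x"
  shows "\<forall>\<^sub>F y in nhds x. c < f y"
proof -
  have "c < Liminf (at x) f" using assms unfolding lsc_fun_def by (meson less_le_trans)
  then have "\<forall>\<^sub>F y in at x. c < f y" by (rule less_LiminfD)
  then have "\<forall>\<^sub>F y in nhds x. y \<noteq> x \<longrightarrow> c < f y" by (simp add: eventually_at_filter)
  then show ?thesis by eventually_elim (use assms(2) in auto)
qed

lemma lsc_fun_closed_sublevel:
  assumes "lsc_fun f"
  shows "closed {y. f y \<le> c}"
  unfolding closed_def
proof (rule open_subopen[THEN iffD2], intro ballI)
  fix x assume "x \<in> - {y. f y \<le> c}"
  then have "c < f x" by simp
  with lsc_fun_eventually_greater[OF assms] have "\<forall>\<^sub>F y in nhds x. c < f y" .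
  then show "\<exists>T. open T \<and> x \<in> T \<and> T \<subseteq> - {y. f y \<le> c}"
    unfolding eventually_nhds by (metis ComplI mem_Collect_eq not_le subsetI)
qed

lemma lsc_fun_add_continuous:
  assumes lsc: "lsc_fun f" and g: "continuous_on UNIV g"
  shows "lsc_fun (\<lambda>y. f y + ereal (g y))"
  unfolding lsc_fun_def
proof
  fix x
  show "f x + ereal (g x) \<le> Liminf (at x) (\<lambda>y. f y + ereal (g y))"
  proof (cases "at x = bot")
    case True then show ?thesis by simp
  next
    case nontrivial: False
    show ?thesis
    proof (rule ereal_le_epsilon2)
      fix \<eta> :: real assume "0 < \<eta>"
      have "\<forall>\<^sub>F y in at x. g x - \<eta> < g y"
        using g \<open>0 < \<eta>\<close> by (intro order_tendstoD) (auto simp: continuous_on_def)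
      have "f x + ereal (g x - \<eta>) \<le> Liminf (at x) f + ereal (g x - \<eta>)"
        using lsc unfolding lsc_fun_def by (intro add_right_mono) blast
      also have "\<dots> = Liminf (at x) (\<lambda>y. f y + ereal (g x - \<eta>))"
        by (rule Liminf_add_ereal_right[OF nontrivial, symmetric]) simp
      also have "\<dots> \<le> Liminf (at x) (\<lambda>y. f y + ereal (g y))"
        using \<open>\<forall>\<^sub>F y in at x. g x - \<eta> < g y\<close>
        by (intro Liminf_mono) (auto elim!: eventually_mono intro: add_left_mono)
      finally have "f x + ereal (g x - \<eta>) \<le> Liminf (at x) (\<lambda>y. f y + ereal (g y))" .
      then have "f x + ereal (g x - \<eta>) + ereal \<eta> \<le> Liminf (at x) (\<lambda>y. f y + ereal (g y)) + ereal \<eta>"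
        by (rule add_right_mono)
      then show "f x + ereal (g x) \<le> Liminf (at x) (\<lambda>y. f y + ereal (g y)) + ereal \<eta>"
        by (metis add.assoc diff_add_cancel plus_ereal.simps(1))
    qed
  qed
qed

definition ekeland_set :: "('a::metric_space \<Rightarrow> ereal) \<Rightarrow> real \<Rightarrow> 'a \<Rightarrow> 'a set" where
  "ekeland_set f l x = {y. f y + ereal (l * dist x y) \<le> f x}"

lemma ekeland_set_refl: "x \<in> ekeland_set f l x"
  by (simp add: ekeland_set_def flip: zero_ereal_def)

lemma ekeland_set_le:
  assumes "0 \<le> l" "y \<in> ekeland_set f l x"
  shows "f y \<le> f x"
proof -
  have "f y \<le> f y + ereal (l * dist x y)" using assms(1) by (simp add: add_increasing2)
  also have "\<dots> \<le> f x" using assms(2) unfolding ekeland_set_def by simp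
  finally show ?thesis .
qed

lemma ekeland_set_trans:
  assumes "0 \<le> l" "y \<in> ekeland_set f l x" "z \<in> ekeland_set f l y"
  shows "z \<in> ekeland_set f l x"
proof -
  have "l * dist x z \<le> l * dist y z + l * dist x y"
    using assms(1) dist_triangle[of x z y] by (metis add.commute distrib_left mult_left_mono dist_commute)
  then have "f z + ereal (l * dist x z) \<le> f z + ereal (l * dist y z) + ereal (l * dist x y)"
    by (metis add.assoc add_left_mono ereal_less_eq(3) plus_ereal.simps(1))
  also have "\<dots> \<le> f y + ereal (l * dist x y)"
    using assms(3) unfolding ekeland_set_def by (simp add: add_right_mono)
  also have "\<dots> \<le> f x" using assms(2) unfolding ekeland_set_def by simp
  finally show ?thesis unfolding ekeland_set_def by simp
qed

lemma closed_ekeland_set: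
  assumes "lsc_fun f"
  shows "closed (ekeland_set f l x)"
proof -
  have "continuous_on UNIV (\<lambda>y. l * dist x y)" by (intro continuous_intros)
  from lsc_fun_closed_sublevel[OF lsc_fun_add_continuous[OF assms this]]
  show ?thesis unfolding ekeland_set_def .
qed

lemma ekeland_set_exists_small:
  assumes nonneg: "\<And>y. 0 \<le> f y" and "f x < \<infinity>" "0 < l" "0 < e"
  shows "\<exists>y \<in> ekeland_set f l x. \<forall>w \<in> ekeland_set f l y. l * dist y w \<le> e"
proof -
  \<comment> \<open>Take \<open>y\<close> almost minimizing \<open>f\<close> on \<open>ekeland_set f l x\<close>; every \<open>w\<close> in
    \<open>ekeland_set f l y\<close> lies in that set too, so \<open>l d(y,w) \<le> f y - f w \<le> e\<close>.\<close>
  define m where "m = Inf (f ` ekeland_set f l x)"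
  have "0 \<le> m" unfolding m_def using nonneg by (auto intro: Inf_greatest)
  moreover have "m \<le> f x" unfolding m_def by (auto intro: Inf_lower ekeland_set_refl)
  ultimately have "m < m + ereal e" using \<open>f x < \<infinity>\<close> \<open>0 < e\<close> by (cases m) auto
  then obtain y where y: "y \<in> ekeland_set f l x" "f y < m + ereal e"
    unfolding m_def Inf_less_iff by blast
  have "l * dist y w \<le> e" if w: "w \<in> ekeland_set f l y" for w
  proof -
    have "m \<le> f w"
      unfolding m_def using ekeland_set_trans[OF _ y(1) w] \<open>0 < l\<close> by (auto intro: Inf_lower)
    moreover have "f w + ereal (l * dist y w) \<le> f y" using w unfolding ekeland_set_def by simp
    moreover have "f w < \<infinity>"
      using ekeland_set_le[OF _ w] ekeland_set_le[OF _ y(1)] \<open>f x < \<infinity>\<close> \<open>0 < l\<close> by auto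
    ultimately have "f w + ereal (l * dist y w) < f w + ereal e"
      using y(2) add_right_mono[OF \<open>m \<le> f w\<close>, of "ereal e"] by order
    then show ?thesis using \<open>f w < \<infinity>\<close> nonneg[of w] by (cases "f w") auto
  qed
  with y(1) show ?thesis by blast
qed

lemma ekeland_nested_sequence:
  assumes nonneg: "\<And>y. 0 \<le> f y" and "f x0 < \<infinity>" "0 < l"
  shows "\<exists>xs. xs 0 = x0 \<and> (\<forall>n. xs (Suc n) \<in> ekeland_set f l (xs n) \<and>
           (\<forall>w \<in> ekeland_set f l (xs (Suc n)). l * dist (xs (Suc n)) w \<le> 1 / Suc n))"
proof -
  have "\<exists>y. (f y < \<infinity> \<and> (Suc n = 0 \<longrightarrow> y = x0)) \<and> y \<in> ekeland_set f l x \<and>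
          (\<forall>w \<in> ekeland_set f l y. l * dist y w \<le> 1 / Suc n)"
    if x: "f x < \<infinity> \<and> (n = 0 \<longrightarrow> x = x0)" for n x
  proof -
    obtain y where "y \<in> ekeland_set f l x" "\<forall>w \<in> ekeland_set f l y. l * dist y w \<le> 1 / Suc n"
      using ekeland_set_exists_small[of f x l "1 / Suc n"] nonneg x \<open>0 < l\<close> by auto
    moreover have "f y < \<infinity>" using ekeland_set_le[OF _ \<open>y \<in> _\<close>] x \<open>0 < l\<close> by auto
    ultimately show ?thesis by blast
  qed
  from dependent_nat_choice[where P = "\<lambda>n x. f x < \<infinity> \<and> (n = 0 \<longrightarrow> x = x0)"
      and Q = "\<lambda>n x y. y \<in> ekeland_set f l x \<and> (\<forall>w \<in> ekeland_set f l y. l * dist y w \<le> 1 / Suc n)",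
      OF _ this]
  obtain xs where "\<forall>n. (f (xs n) < \<infinity> \<and> (n = 0 \<longrightarrow> xs n = x0)) \<and> xs (Suc n) \<in> ekeland_set f l (xs n) \<and>
      (\<forall>w \<in> ekeland_set f l (xs (Suc n)). l * dist (xs (Suc n)) w \<le> 1 / Suc n)"
    using \<open>f x0 < \<infinity>\<close> by blast
  then show ?thesis by blast
qed

lemma ekeland_set_singleton_exists:
  fixes f :: "'a::complete_space \<Rightarrow> ereal"
  assumes lsc: "lsc_fun f" and nonneg: "\<And>y. 0 \<le> f y" and "f x0 < \<infinity>" and l: "0 < l"
  shows "\<exists>z \<in> ekeland_set f l x0. ekeland_set f l z = {z}"
proof -
  obtain xs where xs0: "xs 0 = x0" and step: "\<And>n. xs (Suc n) \<in> ekeland_set f l (xs n)"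
    and small: "\<And>n w. w \<in> ekeland_set f l (xs (Suc n)) \<Longrightarrow> l * dist (xs (Suc n)) w \<le> 1 / Suc n"
    using ekeland_nested_sequence[of f x0 l] nonneg \<open>f x0 < \<infinity>\<close> l by blast
  define T where "T n = ekeland_set f l (xs n)" for n
  have T_Suc: "T (Suc n) \<subseteq> T n" for n
    unfolding T_def using ekeland_set_trans[OF _ step] l by auto
  have diam: "\<exists>n. \<forall>y \<in> T n. \<forall>w \<in> T n. dist y w < \<epsilon>" if "0 < \<epsilon>" for \<epsilon>
  proof -
    have "0 < \<epsilon> * l / 2" using that l by simp
    then obtain N where N: "inverse (real (Suc N)) < \<epsilon> * l / 2"
      using reals_Archimedean by blast
    have "dist y w < \<epsilon>" if "y \<in> T (Suc N)" "w \<in> T (Suc N)" for y w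
    proof -
      have "l * dist y w \<le> l * dist (xs (Suc N)) y + l * dist (xs (Suc N)) w"
        using l dist_triangle3[of y w "xs (Suc N)"] by (simp add: distrib_left[symmetric])
      also have "\<dots> < \<epsilon> * l"
        using small[of y N] small[of w N] that N unfolding T_def by (simp add: inverse_eq_divide)
      finally show ?thesis using l by (simp add: mult.commute)
    qed
    then show ?thesis by blast
  qed
  have "\<exists>z. \<Inter>(range T) = {z}"
  proof (rule decreasing_closed_nest_sing[OF _ _ _ diam])
    show "closed (T n)" for n unfolding T_def by (rule closed_ekeland_set[OF lsc])
    show "T n \<noteq> {}" for n unfolding T_def using ekeland_set_refl by blast
    show "T n \<subseteq> T m" if "m \<le> n" for m n by (rule lift_Suc_antimono_le[of T, OF T_Suc that])
  qed
  then obtain z where z: "\<Inter>(range T) = {z}" by blast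
  then have z_T: "z \<in> T n" for n by blast
  have "ekeland_set f l z \<subseteq> T n" for n
    using ekeland_set_trans[OF _ z_T[of n, unfolded T_def]] l unfolding T_def by auto
  then have "ekeland_set f l z = {z}" using z ekeland_set_refl by blast
  with z_T[of 0] show ?thesis unfolding T_def xs0 by blast
qed

theorem ekeland_variational_principle:
  fixes f :: "'a::complete_space \<Rightarrow> ereal"
  assumes "lsc_fun f" and "\<And>y. 0 \<le> f y" and "f x0 < \<infinity>" and "0 < l"
  shows "\<exists>z. f z + ereal (l * dist z x0) \<le> f x0 \<and> (\<forall>y. f z \<le> f y + ereal (l * dist y z))"
proof -
  obtain z where z: "z \<in> ekeland_set f l x0" and S_z: "ekeland_set f l z = {z}"
    using ekeland_set_singleton_exists[OF assms] by blast
  have "f z \<le> f y + ereal (l * dist y z)" for y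
  proof (rule ccontr)
    assume "\<not> ?thesis"
    then have "y \<in> ekeland_set f l z" unfolding ekeland_set_def by (simp add: dist_commute)
    with S_z \<open>\<not> ?thesis\<close> show False by (simp flip: zero_ereal_def)
  qed
  with z show ?thesis unfolding ekeland_set_def by (auto simp: dist_commute)
qed

lemma global_slope_nonneg: "0 \<le> global_slope f x"
  unfolding global_slope_def by (auto intro: Sup_upper)

lemma global_slope_ge:
  assumes "ereal c \<le> f x" "f y \<le> ereal b" "b < c"
  shows "ereal ((c - b) / dist x y) \<le> global_slope f x"
proof (cases "f x = \<infinity>")
  case True then show ?thesis by (simp add: global_slope_def)
next
  case False
  have "y \<noteq> x" using assms by (metis ereal_less_eq(3) not_le order_trans)
  have "ereal (c - b) \<le> f x - f y" using ereal_minus_mono[OF assms(1,2)] by simp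
  then have "ereal (c - b) \<le> max (f x - f y) 0" by (simp add: le_max_iff_disj)
  have "ereal ((c - b) / dist x y) = ereal (c - b) / ereal (dist x y)" using \<open>y \<noteq> x\<close> by simp
  also have "\<dots> \<le> max (f x - f y) 0 / ereal (dist x y)"
    using \<open>ereal (c - b) \<le> max (f x - f y) 0\<close> \<open>y \<noteq> x\<close> by (intro ereal_divide_right_mono) auto
  also have "\<dots> \<le> global_slope f x"
    unfolding global_slope_def using False \<open>y \<noteq> x\<close>
    by (simp add: le_max_iff_disj) (rule disjI2, rule SUP_upper, simp)
  finally show ?thesis .
qed

lemma global_slope_le:
  assumes fz: "f z = ereal a" and "0 \<le> l" and H: "\<And>y. f z \<le> f y + ereal (l * dist y z)"
  shows "global_slope f z \<le> ereal l"
proof -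
  have "max (f z - f y) 0 / ereal (dist z y) \<le> ereal l" if "y \<noteq> z" for y
  proof (cases "f y")
    case (real b)
    have "max (a - b) 0 \<le> l * dist z y" using H[of y] fz real \<open>0 \<le> l\<close> by (simp add: dist_commute)
    then have "max (a - b) 0 / dist z y \<le> l" using that by (simp add: divide_le_eq)
    then show ?thesis using fz real that by (auto simp: max_def zero_ereal_def[symmetric] split: if_splits)
  next
    case PInf then show ?thesis using fz \<open>0 \<le> l\<close> by simp
  next
    case MInf then show ?thesis using H[of y] fz by simp
  qed
  then show ?thesis unfolding global_slope_def using fz \<open>0 \<le> l\<close> by (auto intro!: Sup_least)
qed

lemma le_add_global_slope:
  assumes "f y \<noteq> -\<infinity>"
  shows "f x \<le> f y + global_slope f x * ereal (dist x y)"
proof (cases "f x \<le> f y \<or> y = x")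
  case True
  have "0 \<le> global_slope f x * ereal (dist x y)" by (simp add: global_slope_nonneg)
  with True show ?thesis by (auto intro: add_increasing2 simp flip: zero_ereal_def)
next
  case False
  then have "y \<noteq> x" "f y < f x" by auto
  show ?thesis
  proof (cases "f x")
    case PInf
    then have "global_slope f x * ereal (dist x y) = \<infinity>"
      using \<open>y \<noteq> x\<close> by (simp add: global_slope_def)
    then show ?thesis by simp
  next
    case (real a)
    with \<open>f y < f x\<close> assms obtain b where fy: "f y = ereal b" "b < a" by (cases "f y") auto
    then have "ereal ((a - b) / dist x y) \<le> global_slope f x"
      using real by (intro global_slope_ge) auto
    then have "ereal ((a - b) / dist x y) * ereal (dist x y) \<le> global_slope f x * ereal (dist x y)"
      by (rule ereal_mult_right_mono) simp
    then show ?thesis using fy real \<open>y \<noteq> x\<close>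
      by (cases "global_slope f x * ereal (dist x y)") auto
  qed (use \<open>f y < f x\<close> in simp)
qed

lemma le_add_global_slope_sum:
  assumes "\<And>y. f y \<noteq> -\<infinity>"
  shows "f (xs 0) \<le> f (xs N) + (\<Sum>n<N. global_slope f (xs n) * ereal (dist (xs n) (xs (Suc n))))"
proof (induction N)
  case (Suc N)
  have "f (xs 0) \<le> f (xs N) + (\<Sum>n<N. global_slope f (xs n) * ereal (dist (xs n) (xs (Suc n))))"
    by (rule Suc)
  also have "\<dots> \<le> f (xs (Suc N)) + global_slope f (xs N) * ereal (dist (xs N) (xs (Suc N)))
      + (\<Sum>n<N. global_slope f (xs n) * ereal (dist (xs n) (xs (Suc n))))"
    by (intro add_right_mono le_add_global_slope assms)
  also have "\<dots> = f (xs (Suc N)) + (\<Sum>n<Suc N. global_slope f (xs n) * ereal (dist (xs n) (xs (Suc n))))"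
    by (simp add: ac_simps)
  finally show ?case .
qed simp

lemma le_exp_sum_relative_increments:
  fixes D :: "nat \<Rightarrow> real"
  assumes pos: "\<And>n. 0 < D n"
  shows "D N \<le> D 0 * exp (\<Sum>n<N. (D (Suc n) - D n) / D n)"
proof (induction N)
  case (Suc N)
  have "D (Suc N) = D N * (1 + (D (Suc N) - D N) / D N)" using pos[of N] by (simp add: field_simps)
  also have "\<dots> \<le> D 0 * exp (\<Sum>n<N. (D (Suc n) - D n) / D n) * exp ((D (Suc N) - D N) / D N)"
  proof (rule mult_mono)
    show "0 \<le> 1 + (D (Suc N) - D N) / D N" using pos[of N] pos[of "Suc N"] by (simp add: field_simps)
  qed (use Suc pos[of N] in auto)
  also have "\<dots> = D 0 * exp (\<Sum>n<Suc N. (D (Suc n) - D n) / D n)" by (simp add: exp_add)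
  finally show ?case .
qed simp

lemma global_slope_ge_relative_increment:
  assumes "ereal c \<le> f x" "f y \<le> ereal b" "b < c"
  shows "ereal ((c - b) * ((dist x' y - dist x y) / dist x y)) \<le> global_slope f x * ereal (dist x x')"
proof -
  have "f y < ereal c" using assms(2,3) by (simp add: le_less_trans)
  then have "f y < f x" using assms(1) by (rule less_le_trans)
  then have "0 < dist x y" by auto
  have "dist x' y - dist x y \<le> dist x x'" using dist_triangle[of x' y x] by (simp add: dist_commute)
  then have "(c - b) / dist x y * (dist x' y - dist x y) \<le> (c - b) / dist x y * dist x x'"
    using assms(3) \<open>0 < dist x y\<close> by (intro mult_left_mono) auto
  then have "ereal ((c - b) * ((dist x' y - dist x y) / dist x y))
      \<le> ereal ((c - b) / dist x y) * ereal (dist x x')" by simp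
  also have "\<dots> \<le> global_slope f x * ereal (dist x x')"
    by (rule ereal_mult_right_mono[OF global_slope_ge[OF assms]]) simp
  finally show ?thesis .
qed

lemma global_slope_bounded_below_along_path:
  assumes above: "\<And>n. ereal c \<le> f (xs n)" and below: "f y \<le> ereal b" "b < c"
    and sums: "\<And>N. (\<Sum>n<N. global_slope f (xs n) * ereal (dist (xs n) (xs (Suc n)))) \<le> ereal s"
  shows "\<exists>\<epsilon>>0. \<forall>n. ereal \<epsilon> \<le> global_slope f (xs n)"
proof -
  define D where "D n = dist (xs n) y" for n
  have "f y < ereal c" using below by (simp add: le_less_trans)
  then have "f y < f (xs n)" for n using above by (rule less_le_trans)
  then have D_pos: "0 < D n" for n unfolding D_def by auto
  have slope: "ereal ((c - b) / D n) \<le> global_slope f (xs n)" for n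
    unfolding D_def using above below by (rule global_slope_ge)
  have "(\<Sum>n<N. (D (Suc n) - D n) / D n) \<le> s / (c - b)" for N
  proof -
    have "ereal ((c - b) * (\<Sum>n<N. (D (Suc n) - D n) / D n))
        = (\<Sum>n<N. ereal ((c - b) * ((D (Suc n) - D n) / D n)))"
      by (simp add: sum_distrib_left)
    also have "\<dots> \<le> (\<Sum>n<N. global_slope f (xs n) * ereal (dist (xs n) (xs (Suc n))))"
      unfolding D_def using above below by (intro sum_mono global_slope_ge_relative_increment)
    also have "\<dots> \<le> ereal s" by (rule sums)
    finally show ?thesis using below(2) by (simp add: field_simps mult.commute)
  qed
  then have D_le: "D n \<le> D 0 * exp (s / (c - b))" for n
    using le_exp_sum_relative_increments[of D n] D_pos
    by (meson exp_le_cancel_iff mult_left_mono order_trans less_imp_le)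
  define \<epsilon> where "\<epsilon> = (c - b) / (D 0 * exp (s / (c - b)))"
  have "0 < \<epsilon>" using below(2) D_pos[of 0] unfolding \<epsilon>_def by simp
  moreover have "ereal \<epsilon> \<le> global_slope f (xs n)" for n
  proof -
    have "\<epsilon> \<le> (c - b) / D n" using D_le[of n] D_pos[of n] below(2) unfolding \<epsilon>_def
      by (intro divide_left_mono) auto
    then show ?thesis using slope[of n] by (meson ereal_less_eq(3) order_trans)
  qed
  ultimately show ?thesis by blast
qed

lemma le_suminf_global_slope:
  fixes f :: "'a::metric_space \<Rightarrow> ereal"
  assumes nonneg: "\<And>y. 0 \<le> f y" and inf: "(INF y. f y) = 0"
    and slopes: "(\<lambda>n. global_slope f (xs n)) \<longlonglongrightarrow> 0"
  shows "f (xs 0) \<le> (\<Sum>n. global_slope f (xs n) * ereal (dist (xs n) (xs (Suc n))))"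
proof (rule ccontr)
  define a where "a n = global_slope f (xs n) * ereal (dist (xs n) (xs (Suc n)))" for n
  have a_nonneg: "0 \<le> a n" for n unfolding a_def by (simp add: global_slope_nonneg)
  assume "\<not> ?thesis"
  then have less: "suminf a < f (xs 0)" unfolding a_def by simp
  moreover have "0 \<le> suminf a" using suminf_upper[of a 0] a_nonneg by simp
  ultimately obtain s where s: "suminf a = ereal s" by (cases "suminf a") auto
  have partial: "sum a {..<N} \<le> ereal s" for N using a_nonneg s by (metis suminf_upper)
  obtain c where c: "0 < c" "ereal (c + s) \<le> f (xs 0)"
  proof (cases "f (xs 0)")
    case (real v) then show ?thesis using less s that[of "v - s"] by auto
  next
    case PInf then show ?thesis using that[of 1] by auto
  qed (use nonneg in auto)
  have above: "ereal c \<le> f (xs n)" for n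
  proof -
    have not_minf: "f y \<noteq> -\<infinity>" for y using nonneg[of y] by auto
    have "ereal (c + s) \<le> f (xs n) + sum a {..<n}"
      using c(2) le_add_global_slope_sum[of f xs n, OF not_minf] unfolding a_def by order
    also have "\<dots> \<le> f (xs n) + ereal s" by (intro add_left_mono partial)
    finally show ?thesis by (cases "f (xs n)") auto
  qed
  have "(INF y. f y) < ereal (c / 2)" using inf c(1) by simp
  then obtain y where "f y < ereal (c / 2)" by (auto simp: INF_less_iff)
  then have "f y \<le> ereal (c / 2)" by simp
  then obtain \<epsilon> where "0 < \<epsilon>" and bound: "\<And>n. ereal \<epsilon> \<le> global_slope f (xs n)"
    using global_slope_bounded_below_along_path[of c f xs y "c / 2" s] above partial c(1)
    unfolding a_def by auto
  have "\<forall>\<^sub>F n in sequentially. global_slope f (xs n) < ereal \<epsilon>"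
    using slopes \<open>0 < \<epsilon>\<close> by (intro order_tendstoD) auto
  then obtain n where "global_slope f (xs n) < ereal \<epsilon>" by (auto simp: eventually_sequentially)
  with bound[of n] show False by simp
qed

lemma ekeland_point_with_small_slope:
  fixes f :: "'a::complete_space \<Rightarrow> ereal"
  assumes lsc: "lsc_fun f" and nonneg: "\<And>y. 0 \<le> f y" and "f x < \<infinity>" and "0 < l"
  shows "\<exists>z. f z + ereal (l * dist z x) \<le> f x \<and> global_slope f z \<le> ereal l"
proof -
  obtain z where z: "f z + ereal (l * dist z x) \<le> f x" "\<And>y. f z \<le> f y + ereal (l * dist y z)"
    using ekeland_variational_principle[OF lsc nonneg \<open>f x < \<infinity>\<close> \<open>0 < l\<close>] by blast
  have "f z \<le> f z + ereal (l * dist z x)" using \<open>0 < l\<close> by (simp add: add_increasing2)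
  also note z(1)
  finally have "f z \<le> f x" .
  then obtain a where "f z = ereal a" using \<open>f x < \<infinity>\<close> nonneg[of z] by (cases "f z") auto
  then have "global_slope f z \<le> ereal l" using z(2) \<open>0 < l\<close> by (intro global_slope_le) auto
  with z(1) show ?thesis by blast
qed

lemma ekeland_descent_path:
  fixes f :: "'a::complete_space \<Rightarrow> ereal"
  assumes lsc: "lsc_fun f" and nonneg: "\<And>y. 0 \<le> f y" and "f x < \<infinity>" and lam: "\<And>n. 0 < lam n"
  shows "\<exists>zs. zs 0 = x \<and> (\<forall>n. f (zs (Suc n)) + ereal (lam n * dist (zs (Suc n)) (zs n)) \<le> f (zs n)
           \<and> global_slope f (zs (Suc n)) \<le> ereal (lam n))"
proof -
  have "\<exists>w. (f w < \<infinity> \<and> (Suc n = 0 \<longrightarrow> w = x)) \<and>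
      f w + ereal (lam n * dist w z) \<le> f z \<and> global_slope f w \<le> ereal (lam n)"
    if z: "f z < \<infinity> \<and> (n = 0 \<longrightarrow> z = x)" for n z
  proof -
    obtain w where w: "f w + ereal (lam n * dist w z) \<le> f z" "global_slope f w \<le> ereal (lam n)"
      using ekeland_point_with_small_slope[OF lsc nonneg _ lam] z by blast
    have "f w \<le> f w + ereal (lam n * dist w z)" using lam[of n] by (simp add: add_increasing2)
    also note w(1)
    finally have "f w \<le> f z" .
    with z have "f w < \<infinity>" by (blast intro: le_less_trans)
    with w show ?thesis by auto
  qed
  from dependent_nat_choice[where P = "\<lambda>n z. f z < \<infinity> \<and> (n = 0 \<longrightarrow> z = x)"
      and Q = "\<lambda>n z w. f w + ereal (lam n * dist w z) \<le> f z \<and> global_slope f w \<le> ereal (lam n)",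
      OF _ this]
  obtain zs where "\<forall>n. (f (zs n) < \<infinity> \<and> (n = 0 \<longrightarrow> zs n = x)) \<and>
      f (zs (Suc n)) + ereal (lam n * dist (zs (Suc n)) (zs n)) \<le> f (zs n) \<and>
      global_slope f (zs (Suc n)) \<le> ereal (lam n)"
    using \<open>f x < \<infinity>\<close> by blast
  then show ?thesis by blast
qed

lemma suminf_le_telescoping:
  fixes a :: "nat \<Rightarrow> ereal" and F :: "nat \<Rightarrow> real"
  assumes "\<And>n. 0 \<le> a n" "\<And>n. 0 \<le> F n" "\<And>n. a n \<le> ereal (F n - F (Suc n))"
  shows "suminf a \<le> ereal (F 0)"
proof (rule suminf_bound)
  show "\<forall>N. sum a {..<N} \<le> ereal (F 0)"
  proof
    fix N
    have "sum a {..<N} \<le> ereal (F 0 - F N)"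
    proof (induction N)
      case (Suc N)
      have "sum a {..<Suc N} = sum a {..<N} + a N" by simp
      also have "\<dots> \<le> ereal (F 0 - F N) + ereal (F N - F (Suc N))" by (intro add_mono Suc assms(3))
      finally show ?case by simp
    qed simp
    also have "\<dots> \<le> ereal (F 0)" using assms(2)[of N] by simp
    finally show "sum a {..<N} \<le> ereal (F 0)" .
  qed
qed (rule assms(1))

lemma I_fun_le: "xs 0 = x \<Longrightarrow> (\<lambda>n. global_slope f (xs n)) \<longlonglongrightarrow> 0 \<Longrightarrow>
    I_fun f x \<le> (\<Sum>n. global_slope f (xs n) * ereal (dist (xs n) (xs (Suc n))))"
  unfolding I_fun_def by (rule Inf_lower) blast

lemma le_I_fun:
  assumes "\<And>y. 0 \<le> f y" and "(INF y. f y) = 0"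
  shows "f x \<le> I_fun f x"
  unfolding I_fun_def using le_suminf_global_slope[OF assms] by (auto intro!: Inf_greatest)

lemma I_fun_le_along_descent:
  fixes f :: "'a::metric_space \<Rightarrow> ereal"
  assumes nonneg: "\<And>y. 0 \<le> f y" and "f (w 0) = ereal r"
    and "0 \<le> \<theta>" and lam: "\<And>n. lam n = \<theta> * lam (Suc n)" "lam \<longlonglongrightarrow> 0"
    and descent: "\<And>n. f (w (Suc n)) + ereal (lam (Suc n) * dist (w (Suc n)) (w n)) \<le> f (w n)"
    and slope: "\<And>n. global_slope f (w n) \<le> ereal (lam n)"
  shows "I_fun f (w 0) \<le> ereal (\<theta> * r)"
proof -
  have lam_nonneg: "0 \<le> lam n" for n
    using slope[of n] global_slope_nonneg[of f "w n"] by (metis ereal_less_eq(5) order_trans)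
  have f_decreasing: "f (w n) \<le> f (w 0)" for n
  proof (rule lift_Suc_antimono_le[of "\<lambda>n. f (w n)"])
    have "f (w (Suc n)) \<le> f (w (Suc n)) + ereal (lam (Suc n) * dist (w (Suc n)) (w n))" for n
      using lam_nonneg[of "Suc n"] by (simp add: add_increasing2)
    then show "f (w (Suc n)) \<le> f (w n)" for n using descent[of n] by (rule order_trans)
  qed simp
  define R where "R n = real_of_ereal (f (w n))" for n
  have f_w: "f (w n) = ereal (R n)" for n
    using f_decreasing[of n] \<open>f (w 0) = ereal r\<close> nonneg[of "w n"] unfolding R_def
    by (cases "f (w n)") auto
  have "global_slope f (w n) * ereal (dist (w n) (w (Suc n))) \<le> ereal (\<theta> * R n - \<theta> * R (Suc n))" for n
  proof -
    have "R (Suc n) + lam (Suc n) * dist (w n) (w (Suc n)) \<le> R n"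
      using descent[of n] by (simp add: f_w dist_commute)
    then have "\<theta> * (lam (Suc n) * dist (w n) (w (Suc n))) \<le> \<theta> * (R n - R (Suc n))"
      using \<open>0 \<le> \<theta>\<close> by (intro mult_left_mono) auto
    then have "ereal (lam n) * ereal (dist (w n) (w (Suc n))) \<le> ereal (\<theta> * R n - \<theta> * R (Suc n))"
      unfolding lam(1)[of n] by (simp add: right_diff_distrib mult.assoc)
    with ereal_mult_right_mono[OF slope[of n]] show ?thesis by (meson order_trans zero_le_dist ereal_less_eq(5))
  qed
  then have "(\<Sum>n. global_slope f (w n) * ereal (dist (w n) (w (Suc n)))) \<le> ereal (\<theta> * R 0)"
    using nonneg[of "w _"] \<open>0 \<le> \<theta>\<close> unfolding f_w
    by (intro suminf_le_telescoping[where F = "\<lambda>n. \<theta> * R n"]) (auto simp: global_slope_nonneg)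
  moreover have "(\<lambda>n. global_slope f (w n)) \<longlonglongrightarrow> 0"
  proof (rule tendsto_sandwich[of "\<lambda>n. 0" _ _ "\<lambda>n. ereal (lam n)"])
    show "(\<lambda>n. ereal (lam n)) \<longlonglongrightarrow> 0" using lam(2) by (simp add: zero_ereal_def)
  qed (auto simp: global_slope_nonneg slope)
  ultimately show ?thesis
    using I_fun_le[of w "w 0" f] \<open>f (w 0) = ereal r\<close> f_w[of 0] by simp
qed

lemma I_fun_le_geometric_descent:
  fixes f :: "'a::complete_space \<Rightarrow> ereal"
  assumes lsc: "lsc_fun f" and nonneg: "\<And>y. 0 \<le> f y" and fx: "f x = ereal r"
    and "0 < \<Lambda>" "1 < \<theta>"
  shows "\<exists>z. \<Lambda> * dist z x \<le> r \<and> I_fun f z \<le> ereal (\<theta> * r)"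
proof -
  define lam where "lam n = \<Lambda> / \<theta> ^ n" for n
  have lam_pos: "0 < lam n" and lam_Suc: "lam n = \<theta> * lam (Suc n)" for n
    using \<open>0 < \<Lambda>\<close> \<open>1 < \<theta>\<close> unfolding lam_def by auto
  have "lam \<longlonglongrightarrow> \<Lambda> * 0"
    unfolding lam_def divide_inverse[of _ "_ ^ _"]
    by (intro tendsto_mult tendsto_const LIMSEQ_inverse_realpow_zero \<open>1 < \<theta>\<close>)
  then have "lam \<longlonglongrightarrow> 0" by simp
  obtain zs where zs0: "zs 0 = x"
    and descent: "\<And>n. f (zs (Suc n)) + ereal (lam n * dist (zs (Suc n)) (zs n)) \<le> f (zs n)"
    and slope: "\<And>n. global_slope f (zs (Suc n)) \<le> ereal (lam n)"
    using ekeland_descent_path[of f x lam] lsc nonneg fx lam_pos by auto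
  from descent[of 0] obtain r1 where r1: "f (zs (Suc 0)) = ereal r1" "r1 + \<Lambda> * dist (zs (Suc 0)) x \<le> r"
    using zs0 fx nonneg[of "zs (Suc 0)"] unfolding lam_def by (cases "f (zs (Suc 0))") auto
  have "I_fun f (zs (Suc 0)) \<le> ereal (\<theta> * r1)"
    by (rule I_fun_le_along_descent[where w = "\<lambda>n. zs (Suc n)",
          OF nonneg r1(1) _ lam_Suc \<open>lam \<longlonglongrightarrow> 0\<close> descent slope])
      (use \<open>1 < \<theta>\<close> in simp)
  moreover have "0 \<le> r1" "0 \<le> \<Lambda> * dist (zs (Suc 0)) x"
    using r1(1) nonneg[of "zs (Suc 0)"] \<open>0 < \<Lambda>\<close> by auto
  ultimately show ?thesis
    using r1(2) \<open>1 < \<theta>\<close> by (intro exI[of _ "zs (Suc 0)"]) (auto intro: order_trans)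
qed

lemma I_fun_le_nearby:
  fixes f :: "'a::complete_space \<Rightarrow> ereal"
  assumes lsc: "lsc_fun f" and nonneg: "\<And>y. 0 \<le> f y" and fx: "f x = ereal r"
    and "0 < \<delta>" "0 < e"
  shows "\<exists>z. dist z x < \<delta> \<and> I_fun f z \<le> ereal (r + e)"
proof -
  have "0 \<le> r" using nonneg[of x] fx by simp
  define \<theta> where "\<theta> = 1 + e / (r + 1)"
  have "0 < (r + 1) / \<delta>" "1 < \<theta>" using \<open>0 \<le> r\<close> \<open>0 < \<delta>\<close> \<open>0 < e\<close> unfolding \<theta>_def by auto
  then obtain z where z: "(r + 1) / \<delta> * dist z x \<le> r" "I_fun f z \<le> ereal (\<theta> * r)"
    using I_fun_le_geometric_descent[OF lsc nonneg fx] by blast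
  have "\<theta> * r = r + e * (r / (r + 1))" unfolding \<theta>_def using \<open>0 \<le> r\<close> by (simp add: field_simps)
  also have "\<dots> \<le> r + e" using \<open>0 \<le> r\<close> \<open>0 < e\<close> by (intro add_left_mono mult_left_le) auto
  finally have "I_fun f z \<le> ereal (r + e)" using z(2) by (simp add: order_trans)
  moreover have "dist z x < \<delta>"
  proof -
    have "(r + 1) * dist z x < (r + 1) * \<delta>" using z(1) \<open>0 < \<delta>\<close> by (simp add: field_simps)
    then show ?thesis using \<open>0 \<le> r\<close> by simp
  qed
  ultimately show ?thesis by blast
qed

lemma lsc_fun_le_lsc_env:
  assumes "lsc_fun f" "\<And>y. f y \<le> g y"
  shows "f x \<le> lsc_env g x"
  unfolding lsc_env_def le_Liminf_iff
proof (intro allI impI)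
  fix c assume "c < f x"
  from lsc_fun_eventually_greater[OF assms(1) this] show "\<forall>\<^sub>F y in nhds x. c < g y"
    by eventually_elim (use assms(2) in \<open>auto intro: less_le_trans\<close>)
qed

lemma lsc_env_le:
  assumes "\<And>\<delta> e. 0 < \<delta> \<Longrightarrow> 0 < e \<Longrightarrow> \<exists>z. dist z x < \<delta> \<and> g z \<le> a + ereal e"
  shows "lsc_env g x \<le> a"
  unfolding lsc_env_def Liminf_def
proof (rule SUP_least)
  fix P assume "P \<in> {P. eventually P (nhds x)}"
  then obtain \<delta> where "0 < \<delta>" and \<delta>: "\<And>y. dist y x < \<delta> \<Longrightarrow> P y"
    by (auto simp: eventually_nhds_metric)
  show "(INF y\<in>Collect P. g y) \<le> a"
  proof (rule ereal_le_epsilon2)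
    fix e :: real assume "0 < e"
    then obtain z where "dist z x < \<delta>" "g z \<le> a + ereal e" using assms \<open>0 < \<delta>\<close> by blast
    then show "(INF y\<in>Collect P. g y) \<le> a + ereal e" using \<delta> by (meson INF_lower2 mem_Collect_eq)
  qed
qed

theorem theorem6p10:
  fixes f :: "'a::complete_space \<Rightarrow> ereal"
  assumes "\<forall>x. f x \<noteq> - \<infinity>"
    and "\<exists>x. f x \<noteq> \<infinity>"
    and "lsc_fun f"
    and "(INF x. f x) = 0"
  shows "\<forall>x. f x = lsc_env (I_fun f) x"
proof
  fix x
  have nonneg: "0 \<le> f y" for y using assms(4) INF_lower[of y UNIV f] by simp
  have "f x \<le> lsc_env (I_fun f) x"
    using assms(3) le_I_fun[OF nonneg assms(4)] by (rule lsc_fun_le_lsc_env)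
  moreover have "lsc_env (I_fun f) x \<le> f x"
  proof (cases "f x")
    case (real r)
    show ?thesis
      using I_fun_le_nearby[OF assms(3) nonneg real] real by (intro lsc_env_le) simp
  qed (use nonneg[of x] in simp_all)
  ultimately show "f x = lsc_env (I_fun f) x" by (rule antisym)
qed

end
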